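(* Consider LocalOMD with positive sampling policy $\mu^s$. Let $C_\Psi=\sup_{x\in\mathcal X,\,p\in\Delta_{\mathcal A(x)}}D_x(p,\mu^1(\cdot|x))$ and let $\lambda_1\ge0$ be such that $\frac1{\eta^{t+1}(x)}-\frac1{\eta^t(x)}\le\lambda_1$ for all $x\in\mathcal X$ and $t\in[T]$. Then for all $t\in[T]$ and $h\in[H]$, \[\tilde\ell^t_h(a^t_h)\le(1+\lambda_1C_\Psi)\,\kappa(\mu^s|x^t_h).\]
   Context: Game structure. Fix an integer $H\ge1$. The min-player's information sets form a finite set $\mathcal X$; each $x$ has a depth $h(x)\in\{1,\dots,H\}$ and a finite nonempty action set $\mathcal A(x)$. Perfect recall: every $x$ of depth $h$ has a unique history $(x_1,a_1,\dots,x_{h-1},a_{h-1},x_h=x)$ with $x_i$ of depth $i$, $a_i\in\mathcal A(x_i)$; $x'$ directly follows $(x,a)$ if $h(x')=h(x)+1$ and the history of $x'$ contains $x$ followed by $a$; $x$ is in the history of $x'$ if $x=x'_i$ for some $i$ (including $x=x'$). A policy is $\mu=(\mu(\cdot|x))_x$ with $\mu(\cdot|x)\in\Delta_{\mathcal A(x)}$; $\Pi_{\min}$ the set of policies; positive if all $\mu(a|x)>0$. For $x$ of depth $h$ and $(x',a')$ with $x$ in the history of $x'$, $x'$ of depth $h'$ with history $(x'_1,a'_1,\dots,x'_{h'})$, $a'_{h'}=a'$: $\mu_{h:}(x',a')=\prod_{i=h}^{h'}\mu(a'_i|x'_i)$. $\kappa(\mu^s|x)=\max_{\mu\in\Pi_{\min}}\sum_{x':\,x\text{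 in history of }x'}\sum_{a'\in\mathcal A(x')}\mu_{h:}(x',a')/\mu^s_{h:}(x',a')$. Trajectories: at each round $t$ the min-player observes $(x^t_h,a^t_h,\ell^t_h)_{h=1}^H$ with $x^t_h$ of depth $h$, $a^t_h\in\mathcal A(x^t_h)$, $x^t_{h+1}$ directly following $(x^t_h,a^t_h)$, and $\ell^t_h\in[0,1]$. LocalOMD. For each $x$, $\Psi_x$ is a Legendre function on a closed convex set $\overline{\Omega_x}\subset\mathbb R^{|\mathcal A(x)|}_{\ge0}$ containing $\Delta_{\mathcal A(x)}$ (interior $\Omega_x$), with Bregman divergence $D_x(p,q)=\Psi_x(p)-\Psi_x(q)-\langle\nabla\Psi_x(q),p-q\rangle$. Learning rates $\eta^t(x)>0$ ($t=1,\dots,T+1$), non-increasing in $t$, with $\eta^{t+1}(x)=\eta^t(x)$ whenever $x\ne x^t_{h(x)}$. Given $\mu^1$ with $\mu^1(\cdot|x)\in\Omega_x$, at round $t$: $q^t_{H+1}=0$; for $h=H,\dots,1$, with $x=x^t_h$, $\tilde\ell^t_h\in\mathbb R^{\mathcal A(x)}$, $\tilde\ell^t_h(a)=\mathbf 1\{a=a^t_h\}(\ell^t_h+q^t_{h+1})/\mu^s(a^t_h|x)$, $h^t_x(p)=\langle\tilde\ell^t_h,p\rangle+\frac1{\eta^t(x)}D_x(p,\mu^t(\cdot|x))+\big(\frac1{\eta^{t+1}(x)}-\frac1{\eta^t(x)}\big)D_x(p,\mu^1(\cdot|x))$ on $\Delta_{\mathcal A(x)}$, $\mu^{t+1}(\cdot|x)=\arg\min_{\Delta_{\mathcal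 A(x)}}h^t_x$ (assumed to exist uniquely in $\Omega_x$), $q^t_h=\min_{\Delta_{\mathcal A(x)}}h^t_x$; for $x$ not on the trajectory, $\mu^{t+1}(\cdot|x)=\mu^t(\cdot|x)$. *)

theory Defs
  imports "HOL-Analysis.Analysis"
begin

text \<open>The tree structure is encoded by a parent map: for an information set x of
depth h > 1, par x = Some (y, b) means that the history of x ends with y followed
by action b (y has depth h-1). Iterating par yields the unique history.\<close>

definition game_structure ::
  "'x set \<Rightarrow> nat \<Rightarrow> ('x \<Rightarrow> nat) \<Rightarrow> ('x \<Rightarrow> 'a set) \<Rightarrow> ('x \<Rightarrow> ('x \<times> 'a) option) \<Rightarrow> bool" where
  "game_structure X H depth A par \<longleftrightarrow>
     finite X \<and> 1 \<le> H \<and>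
     (\<forall>x\<in>X. depth x \<in> {1..H} \<and> finite (A x) \<and> A x \<noteq> {} \<and>
        (depth x = 1 \<longrightarrow> par x = None) \<and>
        (1 < depth x \<longrightarrow> (\<exists>y b. par x = Some (y, b) \<and> y \<in> X \<and>
                                    depth y = depth x - 1 \<and> b \<in> A y)))"

definition hstep :: "('x \<Rightarrow> ('x \<times> 'a) option) \<Rightarrow> 'x \<times> 'a \<Rightarrow> 'x \<times> 'a" where
  "hstep par p = the (par (fst p))"

text \<open>k steps back: the pair (x'_{h'-k}, a'_{h'-k}) of the history of (x', a').\<close>
definition hpair :: "('x \<Rightarrow> ('x \<times> 'a) option) \<Rightarrow> nat \<Rightarrow> 'x \<times> 'a \<Rightarrow> 'x \<times> 'a" where
  "hpair par k p = (hstep par ^^ k) p"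

definition in_history ::
  "('x \<Rightarrow> ('x \<times> 'a) option) \<Rightarrow> ('x \<Rightarrow> nat) \<Rightarrow> 'x \<Rightarrow> 'x \<Rightarrow> bool" where
  "in_history par depth x x' \<longleftrightarrow>
     (\<exists>k < depth x'. \<exists>a. fst (hpair par k (x', a)) = x)"

text \<open>mu_{h:}(x',a') = prod_{i=h}^{h'} mu(a'_i | x'_i), with h = depth x, h' = depth x'.\<close>
definition mu_from ::
  "('x \<Rightarrow> ('x \<times> 'a) option) \<Rightarrow> ('x \<Rightarrow> nat) \<Rightarrow> ('x \<Rightarrow> 'a \<Rightarrow> real) \<Rightarrow> 'x \<Rightarrow> 'x \<Rightarrow> 'a \<Rightarrow> real" where
  "mu_from par depth \<mu> x x' a' =
     (\<Prod>k\<in>{0..depth x' - depth x}. \<mu> (fst (hpair par k (x', a'))) (snd (hpair par k (x', a'))))"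

definition prob_simplex :: "'a set \<Rightarrow> ('a \<Rightarrow> real) set" where
  "prob_simplex A = {p. (\<forall>a\<in>A. 0 \<le> p a) \<and> (\<forall>a. a \<notin> A \<longrightarrow> p a = 0) \<and> sum p A = 1}"

definition policy :: "'x set \<Rightarrow> ('x \<Rightarrow> 'a set) \<Rightarrow> ('x \<Rightarrow> 'a \<Rightarrow> real) \<Rightarrow> bool" where
  "policy X A \<mu> \<longleftrightarrow> (\<forall>x\<in>X. \<mu> x \<in> prob_simplex (A x))"

definition positive_policy :: "'x set \<Rightarrow> ('x \<Rightarrow> 'a set) \<Rightarrow> ('x \<Rightarrow> 'a \<Rightarrow> real) \<Rightarrow> bool" where
  "positive_policy X A \<mu> \<longleftrightarrow> policy X A \<mu> \<and> (\<forall>x\<in>X. \<forall>a\<in>A x. 0 < \<mu> x a)"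

text \<open>kappa(mu^s | x) (the maximum over policies, written as a supremum).\<close>
definition kappa ::
  "'x set \<Rightarrow> ('x \<Rightarrow> 'a set) \<Rightarrow> ('x \<Rightarrow> nat) \<Rightarrow> ('x \<Rightarrow> ('x \<times> 'a) option) \<Rightarrow>
   ('x \<Rightarrow> 'a \<Rightarrow> real) \<Rightarrow> 'x \<Rightarrow> real" where
  "kappa X A depth par \<mu>s x =
     Sup ((\<lambda>\<mu>. \<Sum>x'\<in>{x'\<in>X. in_history par depth x x'}. \<Sum>a'\<in>A x'.
              mu_from par depth \<mu> x x' a' / mu_from par depth \<mu>s x x' a')
          ` {\<mu>. policy X A \<mu>})"

text \<open>R^{A} is identified with the coordinate subspace of real^'a of vectors
vanishing outside A.\<close>
definition coord_space :: "'a set \<Rightarrow> (real^'a::finite) set" where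
  "coord_space A = {v. \<forall>a. a \<notin> A \<longrightarrow> v $ a = 0}"

definition interior_in :: "'a set \<Rightarrow> (real^'a::finite) set \<Rightarrow> (real^'a) set" where
  "interior_in A C = (top_of_set (coord_space A)) interior_of C"

definition strictly_convex_on :: "('b::real_vector) set \<Rightarrow> ('b \<Rightarrow> real) \<Rightarrow> bool" where
  "strictly_convex_on S f \<longleftrightarrow>
     (\<forall>x\<in>S. \<forall>y\<in>S. x \<noteq> y \<longrightarrow> (\<forall>u::real. 0 < u \<longrightarrow> u < 1 \<longrightarrow>
        f ((1 - u) *\<^sub>R x + u *\<^sub>R y) < (1 - u) * f x + u * f y))"

text \<open>Psi is a Legendre function on the closed convex set C (closure of its domain),
C \<subseteq> R^{A}_{\<ge>0}, prob_simplex \<subseteq> C, with gradient grad on the interior of C.\<close>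
definition legendre ::
  "'a set \<Rightarrow> (real^'a::finite \<Rightarrow> real) \<Rightarrow> (real^'a) set \<Rightarrow> (real^'a \<Rightarrow> real^'a) \<Rightarrow> bool" where
  "legendre A Psi C grad \<longleftrightarrow>
     C \<subseteq> coord_space A \<and> closed C \<and> convex C \<and>
     C \<subseteq> {v. \<forall>a\<in>A. 0 \<le> v $ a} \<and>
     vec_lambda ` prob_simplex A \<subseteq> C \<and>
     interior_in A C \<noteq> {} \<and>
     convex_on C Psi \<and>
     strictly_convex_on (interior_in A C) Psi \<and>
     (\<forall>q\<in>interior_in A C. grad q \<in> coord_space A \<and>
        (Psi has_derivative (\<lambda>h. grad q \<bullet> h)) (at q within coord_space A)) \<and>
     (\<forall>s z. (\<forall>n. s n \<in> interior_in A C) \<longrightarrow> s \<longlonglongrightarrow> z \<longrightarrow> z \<in> C - interior_in A C \<longrightarrow>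
        filterlim (\<lambda>n. norm (grad (s n))) at_top sequentially)"

definition bregman :: "(real^'a::finite \<Rightarrow> real) \<Rightarrow> (real^'a \<Rightarrow> real^'a) \<Rightarrow> real^'a \<Rightarrow> real^'a \<Rightarrow> real" where
  "bregman Psi grad p q = Psi p - Psi q - grad q \<bullet> (p - q)"

definition omd_obj ::
  "('x \<Rightarrow> 'a set) \<Rightarrow> ('x \<Rightarrow> real^'a::finite \<Rightarrow> real^'a \<Rightarrow> real) \<Rightarrow> (nat \<Rightarrow> 'x \<Rightarrow> real) \<Rightarrow>
   (nat \<Rightarrow> 'x \<Rightarrow> 'a \<Rightarrow> real) \<Rightarrow> ('a \<Rightarrow> real) \<Rightarrow> nat \<Rightarrow> 'x \<Rightarrow> ('a \<Rightarrow> real) \<Rightarrow> real" where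
  "omd_obj A D \<eta> \<mu> lt t x p =
     (\<Sum>a\<in>A x. lt a * p a)
     + (1 / \<eta> t x) * D x (vec_lambda p) (vec_lambda (\<mu> t x))
     + (1 / \<eta> (Suc t) x - 1 / \<eta> t x) * D x (vec_lambda p) (vec_lambda (\<mu> 1 x))"

definition loss_est ::
  "(nat \<Rightarrow> nat \<Rightarrow> 'x) \<Rightarrow> (nat \<Rightarrow> nat \<Rightarrow> 'a) \<Rightarrow> (nat \<Rightarrow> nat \<Rightarrow> real) \<Rightarrow>
   (nat \<Rightarrow> nat \<Rightarrow> real) \<Rightarrow> ('x \<Rightarrow> 'a \<Rightarrow> real) \<Rightarrow> nat \<Rightarrow> nat \<Rightarrow> 'a \<Rightarrow> real" where
  "loss_est tx ta L q \<mu>s t h a =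
     (if a = ta t h then (L t h + q t (Suc h)) / \<mu>s (tx t h) (ta t h) else 0)"

end

theory Submission
  imports Defs
begin

text \<open>
  Fix a round t with trajectory (x_i, a_i) and write e_i for the loss estimate at (x_i, a_i),
  m_i = \<mu>^t(a_i|x_i) and s_i = \<mu>^s(a_i|x_i). Evaluating the LocalOMD objective at the current
  policy \<mu>^t, where the first Bregman term vanishes, bounds its minimum:
  q_i \<le> e_i m_i + \<lambda>_1 C_\<Psi>. As e_i = (\<ell>_i + q_{i+1}) / s_i with \<ell>_i \<le> 1, unrolling this backward
  recursion gives e_h \<le> (1 + \<lambda>_1 C_\<Psi>) \<Sum>_{j \<ge> h} \<Prod>_{h<l\<le>j} m_l / \<Prod>_{h\<le>l\<le>j} s_l.
  The j-th summand is the ratio \<mu>_{h:}/\<mu>^s_{h:} at (x_j, a_j) for the policy that plays a_h at x_h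
  and follows \<mu>^t elsewhere, so the whole sum is dominated by one of the sums maximised in
  \<kappa>(\<mu>^s|x_h).
\<close>

definition trajectory ::
  "'x set \<Rightarrow> nat \<Rightarrow> ('x \<Rightarrow> nat) \<Rightarrow> ('x \<Rightarrow> 'a set) \<Rightarrow> ('x \<Rightarrow> ('x \<times> 'a) option) \<Rightarrow>
   (nat \<Rightarrow> 'x) \<Rightarrow> (nat \<Rightarrow> 'a) \<Rightarrow> bool" where
  "trajectory X H depth A par x a \<longleftrightarrow>
     (\<forall>i\<in>{1..H}. x i \<in> X \<and> depth (x i) = i \<and> a i \<in> A (x i) \<and>
        (i < H \<longrightarrow> par (x (Suc i)) = Some (x i, a i)))"

lemma hpair_Suc: "hpair par (Suc k) p = hstep par (hpair par k p)"
  by (simp add: hpair_def)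

lemma hpair_in_X:
  assumes game: "game_structure X H depth A par" and x': "x' \<in> X"
  shows "k < depth x' \<Longrightarrow> fst (hpair par k (x', a')) \<in> X \<and> depth (fst (hpair par k (x', a'))) = depth x' - k"
proof (induction k)
  case 0
  then show ?case using x' by (simp add: hpair_def)
next
  case (Suc k)
  define y where "y = fst (hpair par k (x', a'))"
  have y: "y \<in> X" "depth y = depth x' - k" "1 < depth y" using Suc by (auto simp: y_def)
  then obtain z b where "par y = Some (z, b)" "z \<in> X" "depth z = depth y - 1"
    using game unfolding game_structure_def by blast
  then show ?case using y by (simp add: hpair_Suc hstep_def y_def[symmetric])
qed

lemma prob_simplex_bounds:
  assumes "p \<in> prob_simplex A" "finite A"
  shows "0 \<le> p a \<and> p a \<le> 1"
proof (cases "a \<in> A")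
  case True
  then have "p a \<le> sum p A" using assms by (intro member_le_sum) (auto simp: prob_simplex_def)
  then show ?thesis using assms True by (auto simp: prob_simplex_def)
qed (use assms in \<open>auto simp: prob_simplex_def\<close>)

lemma policy_bounds:
  assumes "game_structure X H depth A par" "policy X A \<mu>" "y \<in> X"
  shows "0 \<le> \<mu> y b \<and> \<mu> y b \<le> 1"
  using assms prob_simplex_bounds[of "\<mu> y" "A y" b] by (auto simp: policy_def game_structure_def)

lemma mu_from_bounds:
  assumes game: "game_structure X H depth A par" and "policy X A \<mu>" "x \<in> X" "x' \<in> X"
  shows "0 \<le> mu_from par depth \<mu> x x' a' \<and> mu_from par depth \<mu> x x' a' \<le> 1"
proof -
  have "1 \<le> depth x" "1 \<le> depth x'" using game assms(3,4) by (auto simp: game_structure_def)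
  then have "fst (hpair par k (x', a')) \<in> X" if "k \<in> {0..depth x' - depth x}" for k
    using hpair_in_X[OF game assms(4), of k] that by simp
  then show ?thesis unfolding mu_from_def
    using policy_bounds[OF game assms(2)] by (auto intro!: prod_nonneg prod_le_1)
qed

lemma history_ratio_sum_le_kappa:
  assumes game: "game_structure X H depth A par" and "policy X A \<mu>s" "policy X A \<mu>" "x \<in> X"
  shows "(\<Sum>x'\<in>{x'\<in>X. in_history par depth x x'}. \<Sum>a'\<in>A x'.
            mu_from par depth \<mu> x x' a' / mu_from par depth \<mu>s x x' a') \<le> kappa X A depth par \<mu>s x"
  unfolding kappa_def
proof (rule cSup_upper)
  have "mu_from par depth \<nu> x x' a' / mu_from par depth \<mu>s x x' a' \<le> 1 / mu_from par depth \<mu>s x x' a'"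
    if "policy X A \<nu>" "x' \<in> X" for \<nu> x' a'
    using mu_from_bounds[OF game _ \<open>x \<in> X\<close> \<open>x' \<in> X\<close>] that(1) assms(2) by (simp add: divide_right_mono)
  then show "bdd_above ((\<lambda>\<mu>. \<Sum>x'\<in>{x'\<in>X. in_history par depth x x'}. \<Sum>a'\<in>A x'.
            mu_from par depth \<mu> x x' a' / mu_from par depth \<mu>s x x' a') ` {\<mu>. policy X A \<mu>})"
    by (intro bdd_aboveI2[where M = "\<Sum>x'\<in>{x'\<in>X. in_history par depth x x'}. \<Sum>a'\<in>A x'.
            1 / mu_from par depth \<mu>s x x' a'"] sum_mono) auto
qed (use assms(3) in blast)

lemma hpair_trajectory:
  assumes "trajectory X H depth A par x a" "j \<le> H"
  shows "k < j \<Longrightarrow> hpair par k (x j, a j) = (x (j - k), a (j - k))"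
proof (induction k)
  case (Suc k)
  have "j - Suc k \<in> {1..H}" "j - Suc k < H" using assms(2) Suc.prems by auto
  then have "par (x (Suc (j - Suc k))) = Some (x (j - Suc k), a (j - Suc k))"
    using assms(1) unfolding trajectory_def by blast
  moreover have "Suc (j - Suc k) = j - k" using Suc.prems by simp
  ultimately show ?case using Suc by (simp add: hpair_Suc hstep_def)
qed (simp add: hpair_def)

lemma mu_from_trajectory:
  assumes traj: "trajectory X H depth A par x a" and "1 \<le> h" "h \<le> j" "j \<le> H"
  shows "mu_from par depth \<nu> (x h) (x j) (a j) = (\<Prod>l\<in>{h..j}. \<nu> (x l) (a l))"
proof -
  have "depth (x i) = i" if "i \<in> {1..H}" for i using traj that by (simp add: trajectory_def)
  then have "mu_from par depth \<nu> (x h) (x j) (a j) = (\<Prod>k\<in>{0..j - h}. \<nu> (x (j - k)) (a (j - k)))"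
    unfolding mu_from_def using assms hpair_trajectory[OF traj \<open>j \<le> H\<close>] by (auto intro!: prod.cong)
  also have "\<dots> = (\<Prod>l\<in>{h..j}. \<nu> (x l) (a l))"
    by (rule prod.reindex_bij_witness[of _ "\<lambda>l. j - l" "\<lambda>k. j - k"]) (use assms in auto)
  finally show ?thesis .
qed

lemma trajectory_sum_le_subtree_sum:
  fixes f :: "'x \<Rightarrow> 'a \<Rightarrow> 'b::ordered_comm_monoid_add"
  assumes game: "game_structure X H depth A par" and traj: "trajectory X H depth A par x a"
    and h: "h \<in> {1..H}" and nonneg: "\<And>x' a'. x' \<in> X \<Longrightarrow> 0 \<le> f x' a'"
  shows "(\<Sum>j\<in>{h..H}. f (x j) (a j)) \<le> (\<Sum>x'\<in>{x'\<in>X. in_history par depth (x h) x'}. \<Sum>a'\<in>A x'. f x' a')"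
proof -
  define S where "S = Sigma {x'\<in>X. in_history par depth (x h) x'} A"
  have xj: "x j \<in> X" "depth (x j) = j" "a j \<in> A (x j)" if "j \<in> {h..H}" for j
    using traj that h by (auto simp: trajectory_def)
  have "in_history par depth (x h) (x j)" if j: "j \<in> {h..H}" for j
  proof -
    have "j - h < depth (x j)" "fst (hpair par (j - h) (x j, a j)) = x h"
      using hpair_trajectory[OF traj, of j "j - h"] xj j h by auto
    then show ?thesis unfolding in_history_def by blast
  qed
  then have sub: "(\<lambda>j. (x j, a j)) ` {h..H} \<subseteq> S" using xj by (auto simp: S_def)
  have inj: "inj_on (\<lambda>j. (x j, a j)) {h..H}"
  proof (rule inj_onI)
    fix i j assume "i \<in> {h..H}" "j \<in> {h..H}" "(x i, a i) = (x j, a j)"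
    then show "i = j" using xj(2) by (metis fst_conv)
  qed
  have fin: "finite S" using game by (auto simp: S_def game_structure_def)
  have "(\<Sum>j\<in>{h..H}. f (x j) (a j)) = (\<Sum>(x', a')\<in>(\<lambda>j. (x j, a j)) ` {h..H}. f x' a')"
    by (simp add: sum.reindex[OF inj])
  also have "\<dots> \<le> (\<Sum>(x', a')\<in>S. f x' a')"
    by (rule sum_mono2[OF fin sub]) (auto simp: S_def nonneg)
  also have "\<dots> = (\<Sum>x'\<in>{x'\<in>X. in_history par depth (x h) x'}. \<Sum>a'\<in>A x'. f x' a')"
    using game unfolding S_def by (subst sum.Sigma) (auto simp: game_structure_def)
  finally show ?thesis .
qed

lemma policy_fix_action:
  assumes "policy X A \<mu>" "b \<in> A y" "finite (A y)"
  shows "policy X A (\<mu>(y := (\<lambda>c. if c = b then 1 else 0)))"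
  using assms by (auto simp: policy_def prob_simplex_def)

lemma trajectory_ratio_le_kappa:
  assumes game: "game_structure X H depth A par" and "policy X A \<mu>s" "policy X A \<mu>"
    and traj: "trajectory X H depth A par x a" and h: "h \<in> {1..H}"
  shows "(\<Sum>j\<in>{h..H}. (\<Prod>l\<in>{Suc h..j}. \<mu> (x l) (a l)) / (\<Prod>l\<in>{h..j}. \<mu>s (x l) (a l)))
           \<le> kappa X A depth par \<mu>s (x h)"
proof -
  define \<nu> where "\<nu> = \<mu>(x h := (\<lambda>c. if c = a h then 1 else 0))"
  have xl: "x l \<in> X" "depth (x l) = l" "a l \<in> A (x l)" if "l \<in> {1..H}" for l
    using traj that by (auto simp: trajectory_def)
  have xh: "x h \<in> X" using xl h by blast
  have \<nu>: "policy X A \<nu>"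
    unfolding \<nu>_def using game xl h assms(3) by (intro policy_fix_action) (auto simp: game_structure_def)
  have "(\<Prod>l\<in>{Suc h..j}. \<mu> (x l) (a l)) = mu_from par depth \<nu> (x h) (x j) (a j)"
    and "(\<Prod>l\<in>{h..j}. \<mu>s (x l) (a l)) = mu_from par depth \<mu>s (x h) (x j) (a j)"
    if j: "j \<in> {h..H}" for j
  proof -
    have "x l \<noteq> x h" if "l \<in> {Suc h..j}" for l
      using xl(2)[of l] xl(2)[of h] that j h by auto
    then have "(\<Prod>l\<in>{Suc h..j}. \<mu> (x l) (a l)) = (\<Prod>l\<in>{h..j}. \<nu> (x l) (a l))"
      using j by (simp add: prod.atLeast_Suc_atMost \<nu>_def)
    then show "(\<Prod>l\<in>{Suc h..j}. \<mu> (x l) (a l)) = mu_from par depth \<nu> (x h) (x j) (a j)"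
      using mu_from_trajectory[OF traj] j h by simp
    show "(\<Prod>l\<in>{h..j}. \<mu>s (x l) (a l)) = mu_from par depth \<mu>s (x h) (x j) (a j)"
      using mu_from_trajectory[OF traj] j h by simp
  qed
  then have "(\<Sum>j\<in>{h..H}. (\<Prod>l\<in>{Suc h..j}. \<mu> (x l) (a l)) / (\<Prod>l\<in>{h..j}. \<mu>s (x l) (a l)))
      = (\<Sum>j\<in>{h..H}. mu_from par depth \<nu> (x h) (x j) (a j) / mu_from par depth \<mu>s (x h) (x j) (a j))"
    by simp
  also have "\<dots> \<le> (\<Sum>x'\<in>{x'\<in>X. in_history par depth (x h) x'}. \<Sum>a'\<in>A x'.
                 mu_from par depth \<nu> (x h) x' a' / mu_from par depth \<mu>s (x h) x' a')"
    using mu_from_bounds[OF game \<nu> xh] mu_from_bounds[OF game assms(2) xh]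
    by (intro trajectory_sum_le_subtree_sum[OF game traj h]) simp
  also have "\<dots> \<le> kappa X A depth par \<mu>s (x h)"
    by (rule history_ratio_sum_le_kappa[OF game assms(2) \<nu> xh])
  finally show ?thesis .
qed

lemma norm_simplex_le_1:
  fixes p :: "'a::finite \<Rightarrow> real"
  assumes "p \<in> prob_simplex A"
  shows "norm (vec_lambda p) \<le> 1"
proof -
  have "norm (vec_lambda p) \<le> (\<Sum>i\<in>UNIV. \<bar>p i\<bar>)" using norm_le_l1_cart[of "vec_lambda p"] by simp
  also have "\<dots> = sum p A"
    using assms by (intro sum.mono_neutral_cong_right) (auto simp: prob_simplex_def)
  finally show ?thesis using assms by (simp add: prob_simplex_def)
qed

lemma simplex_eq_sum_axis:
  fixes p :: "'a::finite \<Rightarrow> real"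
  assumes "p \<in> prob_simplex A"
  shows "vec_lambda p = (\<Sum>a\<in>A. p a *\<^sub>R axis a 1)"
  using assms by (auto simp: vec_eq_iff sum_component axis_def prob_simplex_def if_distrib
      sum.delta' cong: if_cong)

lemma convex_on_simplex_le:
  fixes p :: "'a::finite \<Rightarrow> real"
  assumes cvx: "convex_on C Psi" and sub: "vec_lambda ` prob_simplex A \<subseteq> C"
    and p: "p \<in> prob_simplex A"
  shows "Psi (vec_lambda p) \<le> (\<Sum>a\<in>A. \<bar>Psi (axis a 1)\<bar>)"
proof -
  have "axis a 1 \<in> C" if "a \<in> A" for a
  proof -
    have "(\<lambda>b. if b = a then 1 else 0) \<in> prob_simplex A" using that by (auto simp: prob_simplex_def)
    then show ?thesis using sub by (force simp: axis_def)
  qed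
  moreover have "A \<noteq> {}" using p by (auto simp: prob_simplex_def)
  ultimately have "Psi (vec_lambda p) \<le> (\<Sum>a\<in>A. p a * Psi (axis a 1))"
    unfolding simplex_eq_sum_axis[OF p] using p
    by (intro convex_on_sum[OF _ _ cvx]) (auto simp: prob_simplex_def)
  also have "\<dots> \<le> (\<Sum>a\<in>A. \<bar>Psi (axis a 1)\<bar>)"
  proof (intro sum_mono)
    fix a
    have "0 \<le> p a" "p a \<le> 1" using prob_simplex_bounds[OF p] by auto
    then have "p a * Psi (axis a 1) \<le> p a * \<bar>Psi (axis a 1)\<bar>" by (simp add: mult_left_mono)
    also have "\<dots> \<le> \<bar>Psi (axis a 1)\<bar>" using \<open>0 \<le> p a\<close> \<open>p a \<le> 1\<close> by (intro mult_left_le_one_le) auto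
    finally show "p a * Psi (axis a 1) \<le> \<bar>Psi (axis a 1)\<bar>" .
  qed
  finally show ?thesis .
qed

lemma bregman_simplex_le:
  fixes p :: "'a::finite \<Rightarrow> real"
  assumes "convex_on C Psi" "vec_lambda ` prob_simplex A \<subseteq> C"
    and "p \<in> prob_simplex A" "m \<in> prob_simplex A"
  shows "bregman Psi grad (vec_lambda p) (vec_lambda m) \<le>
     (\<Sum>a\<in>A. \<bar>Psi (axis a 1)\<bar>) + \<bar>Psi (vec_lambda m)\<bar> + 2 * norm (grad (vec_lambda m))"
proof -
  have "norm (vec_lambda m - vec_lambda p) \<le> 2"
    using norm_simplex_le_1[OF assms(3)] norm_simplex_le_1[OF assms(4)]
      norm_triangle_ineq4[of "vec_lambda m" "vec_lambda p"] by linarith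
  have "- (grad (vec_lambda m) \<bullet> (vec_lambda p - vec_lambda m))
          = grad (vec_lambda m) \<bullet> (vec_lambda m - vec_lambda p)"
    by (simp add: inner_diff_right)
  also have "\<dots> \<le> norm (grad (vec_lambda m)) * norm (vec_lambda m - vec_lambda p)"
    by (rule norm_cauchy_schwarz)
  also have "\<dots> \<le> norm (grad (vec_lambda m)) * 2"
    using \<open>norm (vec_lambda m - vec_lambda p) \<le> 2\<close> by (simp add: mult_left_mono)
  finally have "- (grad (vec_lambda m) \<bullet> (vec_lambda p - vec_lambda m)) \<le> norm (grad (vec_lambda m)) * 2" .
  moreover have "Psi (vec_lambda p) \<le> (\<Sum>a\<in>A. \<bar>Psi (axis a 1)\<bar>)"
    using assms(1-3) by (rule convex_on_simplex_le)
  ultimately show ?thesis unfolding bregman_def by linarith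
qed

text \<open>C_\<Psi> is a supremum of reals, so it is meaningful only once this set is shown bounded.\<close>

lemma bdd_above_bregman_simplex:
  fixes Psi :: "'x \<Rightarrow> real^'a::finite \<Rightarrow> real"
  assumes "finite X" "\<forall>x\<in>X. legendre (A x) (Psi x) (Cl x) (grad x)" "\<forall>x\<in>X. m x \<in> prob_simplex (A x)"
  shows "bdd_above {bregman (Psi x) (grad x) (vec_lambda p) (vec_lambda (m x)) | x p.
                      x \<in> X \<and> p \<in> prob_simplex (A x)}"
proof -
  define B where "B x = (\<Sum>a\<in>A x. \<bar>Psi x (axis a 1)\<bar>) + \<bar>Psi x (vec_lambda (m x))\<bar>
                          + 2 * norm (grad x (vec_lambda (m x)))" for x
  show ?thesis
  proof (rule bdd_aboveI)
    fix y assume "y \<in> {bregman (Psi x) (grad x) (vec_lambda p) (vec_lambda (m x)) | x p.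
                          x \<in> X \<and> p \<in> prob_simplex (A x)}"
    then obtain x p where y: "y = bregman (Psi x) (grad x) (vec_lambda p) (vec_lambda (m x))"
      and x: "x \<in> X" and p: "p \<in> prob_simplex (A x)" by blast
    have "convex_on (Cl x) (Psi x)" "vec_lambda ` prob_simplex (A x) \<subseteq> Cl x"
      using assms(2) x by (auto simp: legendre_def)
    then have "y \<le> B x" unfolding y B_def using bregman_simplex_le p assms(3) x by blast
    also have "\<dots> \<le> sum B X" using assms(1) x by (intro member_le_sum) (auto simp: B_def)
    finally show "y \<le> sum B X" .
  qed
qed

lemma bregman_le_Sup_simplex:
  fixes Psi :: "'x \<Rightarrow> real^'a::finite \<Rightarrow> real"
  assumes "finite X" "\<forall>x\<in>X. legendre (A x) (Psi x) (Cl x) (grad x)" "\<forall>x\<in>X. m x \<in> prob_simplex (A x)"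
    and "x \<in> X" "p \<in> prob_simplex (A x)"
  shows "bregman (Psi x) (grad x) (vec_lambda p) (vec_lambda (m x)) \<le>
    Sup {bregman (Psi x) (grad x) (vec_lambda p) (vec_lambda (m x)) | x p. x \<in> X \<and> p \<in> prob_simplex (A x)}"
  by (rule cSup_upper[OF _ bdd_above_bregman_simplex[OF assms(1-3)]]) (use assms(4,5) in blast)

lemma policy_iterates:
  assumes game: "game_structure X H depth A par" and init: "policy X A (\<mu> 1)"
    and on_traj: "\<forall>t\<in>{1..T}. \<forall>h\<in>{1..H}. \<mu> (Suc t) (tx t h) \<in> prob_simplex (A (tx t h))"
    and off_traj: "\<forall>t\<in>{1..T}. \<forall>x\<in>X. x \<noteq> tx t (depth x) \<longrightarrow> \<mu> (Suc t) x = \<mu> t x"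
  shows "t \<in> {1..Suc T} \<Longrightarrow> policy X A (\<mu> t)"
proof (induction t)
  case (Suc t)
  show ?case
  proof (cases "t = 0")
    case False
    then have t: "t \<in> {1..T}" and IH: "policy X A (\<mu> t)" using Suc by auto
    have "\<mu> (Suc t) x \<in> prob_simplex (A x)" if x: "x \<in> X" for x
    proof (cases "x = tx t (depth x)")
      case True
      have "depth x \<in> {1..H}" using game x by (auto simp: game_structure_def)
      then have "\<mu> (Suc t) (tx t (depth x)) \<in> prob_simplex (A (tx t (depth x)))"
        using on_traj t by blast
      then show ?thesis by (simp only: True[symmetric])
    qed (use off_traj t x IH in \<open>auto simp: policy_def\<close>)
    then show ?thesis by (simp add: policy_def)
  qed (use init in simp)
qed simp

lemma sum_loss_est:
  assumes "finite B" "ta t h \<in> B"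
  shows "(\<Sum>b\<in>B. loss_est tx ta L q \<mu>s t h b * p b) = loss_est tx ta L q \<mu>s t h (ta t h) * p (ta t h)"
proof -
  have "(\<Sum>b\<in>B. loss_est tx ta L q \<mu>s t h b * p b)
      = (\<Sum>b\<in>B. if b = ta t h then loss_est tx ta L q \<mu>s t h (ta t h) * p (ta t h) else 0)"
    by (intro sum.cong) (auto simp: loss_est_def)
  then show ?thesis using assms by simp
qed

lemma omd_obj_le_current:
  assumes min: "\<forall>p\<in>prob_simplex (A x). omd_obj A D \<eta> \<mu> lt t x \<mu>' \<le> omd_obj A D \<eta> \<mu> lt t x p"
    and cur: "\<mu> t x \<in> prob_simplex (A x)"
    and D0: "D x (vec_lambda (\<mu> t x)) (vec_lambda (\<mu> t x)) = 0"
    and eta: "0 < \<eta> (Suc t) x" "\<eta> (Suc t) x \<le> \<eta> t x" "1 / \<eta> (Suc t) x - 1 / \<eta> t x \<le> lam"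
    and DC: "D x (vec_lambda (\<mu> t x)) (vec_lambda (\<mu> 1 x)) \<le> C" "0 \<le> C"
  shows "omd_obj A D \<eta> \<mu> lt t x \<mu>' \<le> (\<Sum>a\<in>A x. lt a * \<mu> t x a) + lam * C"
proof -
  define c where "c = 1 / \<eta> (Suc t) x - 1 / \<eta> t x"
  have "0 \<le> c" unfolding c_def using eta by (simp add: frac_le)
  with DC(1) have "c * D x (vec_lambda (\<mu> t x)) (vec_lambda (\<mu> 1 x)) \<le> c * C"
    by (rule mult_left_mono)
  also have "\<dots> \<le> lam * C" using eta(3) DC(2) unfolding c_def by (rule mult_right_mono)
  finally have "c * D x (vec_lambda (\<mu> t x)) (vec_lambda (\<mu> 1 x)) \<le> lam * C" .
  moreover have "omd_obj A D \<eta> \<mu> lt t x (\<mu> t x)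
      = (\<Sum>a\<in>A x. lt a * \<mu> t x a) + c * D x (vec_lambda (\<mu> t x)) (vec_lambda (\<mu> 1 x))"
    unfolding omd_obj_def c_def D0 by simp
  ultimately show ?thesis using min cur by fastforce
qed

lemma backward_recursion_bound:
  fixes ell L q m s :: "nat \<Rightarrow> real"
  assumes "h \<le> H" "0 \<le> c" "q (Suc H) = 0"
    and ell: "\<And>i. i \<in> {h..H} \<Longrightarrow> ell i = (L i + q (Suc i)) / s i"
    and s: "\<And>i. i \<in> {h..H} \<Longrightarrow> 0 < s i" and L: "\<And>i. i \<in> {h..H} \<Longrightarrow> L i \<le> 1"
    and m: "\<And>i. i \<in> {h..H} \<Longrightarrow> 0 \<le> m i"
    and q: "\<And>i. i \<in> {h..H} \<Longrightarrow> q i \<le> ell i * m i + c"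
  shows "ell h \<le> (1 + c) * (\<Sum>j\<in>{h..H}. (\<Prod>l\<in>{Suc h..j}. m l) / (\<Prod>l\<in>{h..j}. s l))"
  using \<open>h \<le> H\<close>
proof (induction rule: inc_induct)
  case base
  have "ell H \<le> 1 / s H" using ell[of H] s[of H] L[of H] \<open>h \<le> H\<close> \<open>q (Suc H) = 0\<close>
    by (simp add: divide_right_mono)
  also have "\<dots> \<le> (1 + c) / s H" using s[of H] \<open>h \<le> H\<close> \<open>0 \<le> c\<close> by (simp add: divide_right_mono)
  finally show ?case by simp
next
  case (step n)
  define R where "R i = (\<Sum>j\<in>{i..H}. (\<Prod>l\<in>{Suc i..j}. m l) / (\<Prod>l\<in>{i..j}. s l))" for i
  have n: "n \<in> {h..H}" "Suc n \<in> {h..H}" using step.hyps by auto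
  have "L n + q (Suc n) \<le> 1 + ell (Suc n) * m (Suc n) + c" using L[OF n(1)] q[OF n(2)] by simp
  also have "\<dots> \<le> (1 + c) * (1 + m (Suc n) * R (Suc n))"
    using mult_right_mono[OF step.IH m[OF n(2)]] \<open>0 \<le> c\<close> m[OF n(2)]
    by (simp add: R_def algebra_simps)
  finally have "ell n \<le> (1 + c) * ((1 + m (Suc n) * R (Suc n)) / s n)"
    using ell[OF n(1)] s[OF n(1)] by (simp add: divide_right_mono)
  moreover have "R n = (1 + m (Suc n) * R (Suc n)) / s n"
  proof -
    have "(\<Prod>l\<in>{Suc n..j}. m l) / (\<Prod>l\<in>{n..j}. s l)
          = m (Suc n) * ((\<Prod>l\<in>{Suc (Suc n)..j}. m l) / (\<Prod>l\<in>{Suc n..j}. s l)) / s n"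
      if "j \<in> {Suc n..H}" for j
      using that by (simp add: prod.atLeast_Suc_atMost)
    then have "R n = 1 / s n + (\<Sum>j\<in>{Suc n..H}.
                 m (Suc n) * ((\<Prod>l\<in>{Suc (Suc n)..j}. m l) / (\<Prod>l\<in>{Suc n..j}. s l)) / s n)"
      using step.hyps by (simp add: R_def sum.atLeast_Suc_atMost)
    also have "\<dots> = (1 + m (Suc n) * R (Suc n)) / s n"
      by (simp add: R_def sum_distrib_left sum_divide_distrib add_divide_distrib)
    finally show ?thesis .
  qed
  ultimately show ?case by (simp add: R_def)
qed

lemma loss_est_le_kappa:
  assumes game: "game_structure X H depth A par" and traj: "trajectory X H depth A par (tx t) (ta t)"
    and samp: "positive_policy X A \<mu>s" and pol: "policy X A \<mu>"
    and L: "\<forall>i\<in>{1..H}. L t i \<le> 1" and q_last: "q t (Suc H) = 0" and "0 \<le> c"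
    and q: "\<forall>i\<in>{1..H}. q t i \<le> loss_est tx ta L q \<mu>s t i (ta t i) * \<mu> (tx t i) (ta t i) + c"
    and h: "h \<in> {1..H}"
  shows "loss_est tx ta L q \<mu>s t h (ta t h) \<le> (1 + c) * kappa X A depth par \<mu>s (tx t h)"
proof -
  have "loss_est tx ta L q \<mu>s t h (ta t h) \<le> (1 + c) *
      (\<Sum>j\<in>{h..H}. (\<Prod>l\<in>{Suc h..j}. \<mu> (tx t l) (ta t l)) / (\<Prod>l\<in>{h..j}. \<mu>s (tx t l) (ta t l)))"
  proof (rule backward_recursion_bound)
    show "h \<le> H" "0 \<le> c" "q t (Suc H) = 0" using h \<open>0 \<le> c\<close> q_last by auto
    fix i assume "i \<in> {h..H}"
    then have i: "i \<in> {1..H}" using h by auto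
    then have x: "tx t i \<in> X" "ta t i \<in> A (tx t i)" using traj by (auto simp: trajectory_def)
    show "loss_est tx ta L q \<mu>s t i (ta t i) = (L t i + q t (Suc i)) / \<mu>s (tx t i) (ta t i)"
      by (simp add: loss_est_def)
    show "0 < \<mu>s (tx t i) (ta t i)" using samp x by (simp add: positive_policy_def)
    show "L t i \<le> 1" using L i by blast
    show "0 \<le> \<mu> (tx t i) (ta t i)" using policy_bounds[OF game pol x(1)] by simp
    show "q t i \<le> loss_est tx ta L q \<mu>s t i (ta t i) * \<mu> (tx t i) (ta t i) + c" using q i by blast
  qed
  also have "\<dots> \<le> (1 + c) * kappa X A depth par \<mu>s (tx t h)"
    using trajectory_ratio_le_kappa[OF game _ pol traj h] samp \<open>0 \<le> c\<close>
    by (intro mult_left_mono) (auto simp: positive_policy_def)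
  finally show ?thesis .
qed

theorem mainTheorem4:
  fixes X :: "'x set" and H T :: nat and depth :: "'x \<Rightarrow> nat"
    and A :: "'x \<Rightarrow> 'a::finite set" and par :: "'x \<Rightarrow> ('x \<times> 'a) option"
    and tx :: "nat \<Rightarrow> nat \<Rightarrow> 'x" and ta :: "nat \<Rightarrow> nat \<Rightarrow> 'a" and L :: "nat \<Rightarrow> nat \<Rightarrow> real"
    and Psi :: "'x \<Rightarrow> real^'a \<Rightarrow> real" and Cl :: "'x \<Rightarrow> (real^'a) set"
    and grad :: "'x \<Rightarrow> real^'a \<Rightarrow> real^'a"
    and \<eta> :: "nat \<Rightarrow> 'x \<Rightarrow> real" and \<mu> :: "nat \<Rightarrow> 'x \<Rightarrow> 'a \<Rightarrow> real"
    and \<mu>s :: "'x \<Rightarrow> 'a \<Rightarrow> real" and q :: "nat \<Rightarrow> nat \<Rightarrow> real"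
    and lam1 CPsi :: real
  defines "D \<equiv> \<lambda>x. bregman (Psi x) (grad x)"
  assumes game: "game_structure X H depth A par"
    and traj: "\<forall>t\<in>{1..T}. \<forall>h\<in>{1..H}. tx t h \<in> X \<and> depth (tx t h) = h \<and>
                 ta t h \<in> A (tx t h) \<and> 0 \<le> L t h \<and> L t h \<le> 1 \<and>
                 (h < H \<longrightarrow> par (tx t (Suc h)) = Some (tx t h, ta t h))"
    and leg: "\<forall>x\<in>X. legendre (A x) (Psi x) (Cl x) (grad x)"
    and eta_pos: "\<forall>t\<in>{1..Suc T}. \<forall>x\<in>X. 0 < \<eta> t x"
    and eta_noninc: "\<forall>t\<in>{1..T}. \<forall>x\<in>X. \<eta> (Suc t) x \<le> \<eta> t x"
    and eta_local: "\<forall>t\<in>{1..T}. \<forall>x\<in>X. x \<noteq> tx t (depth x) \<longrightarrow> \<eta> (Suc t) x = \<eta> t x"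
    and samp: "positive_policy X A \<mu>s"
    and init: "policy X A (\<mu> 1)" "\<forall>x\<in>X. vec_lambda (\<mu> 1 x) \<in> interior_in (A x) (Cl x)"
    and q_last: "\<forall>t\<in>{1..T}. q t (Suc H) = 0"
    and step: "\<forall>t\<in>{1..T}. \<forall>h\<in>{1..H}.
        (let x = tx t h; obj = omd_obj A D \<eta> \<mu> (loss_est tx ta L q \<mu>s t h) t x in
           \<mu> (Suc t) x \<in> prob_simplex (A x) \<and>
           vec_lambda (\<mu> (Suc t) x) \<in> interior_in (A x) (Cl x) \<and>
           (\<forall>p\<in>prob_simplex (A x). obj (\<mu> (Suc t) x) \<le> obj p) \<and>
           (\<forall>p\<in>prob_simplex (A x). obj p \<le> obj (\<mu> (Suc t) x) \<longrightarrow> p = \<mu> (Suc t) x) \<and>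
           q t h = obj (\<mu> (Suc t) x))"
    and off_traj: "\<forall>t\<in>{1..T}. \<forall>x\<in>X. x \<noteq> tx t (depth x) \<longrightarrow> \<mu> (Suc t) x = \<mu> t x"
    and C_def: "CPsi = Sup {D x (vec_lambda p) (vec_lambda (\<mu> 1 x)) | x p. x \<in> X \<and> p \<in> prob_simplex (A x)}"
    and lam_nonneg: "0 \<le> lam1"
    and lam_bound: "\<forall>x\<in>X. \<forall>t\<in>{1..T}. 1 / \<eta> (Suc t) x - 1 / \<eta> t x \<le> lam1"
  shows "\<forall>t\<in>{1..T}. \<forall>h\<in>{1..H}.
           loss_est tx ta L q \<mu>s t h (ta t h) \<le> (1 + lam1 * CPsi) * kappa X A depth par \<mu>s (tx t h)"
proof (intro ballI)
  fix t h assume t: "t \<in> {1..T}" and h: "h \<in> {1..H}"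
  have tr: "trajectory X H depth A par (tx t) (ta t)" using traj t by (simp add: trajectory_def)
  have pol: "policy X A (\<mu> t)"
    using policy_iterates[OF game init(1) _ off_traj] step t by (auto simp: Let_def)
  have D_le: "D x (vec_lambda p) (vec_lambda (\<mu> 1 x)) \<le> CPsi"
    if "x \<in> X" "p \<in> prob_simplex (A x)" for x p
    unfolding C_def D_def using game leg init(1) that
    by (intro bregman_le_Sup_simplex) (auto simp: game_structure_def policy_def)
  have "tx t h \<in> X" using tr h by (simp add: trajectory_def)
  then have C0: "0 \<le> CPsi"
    using D_le[of "tx t h" "\<mu> 1 (tx t h)"] init(1) by (simp add: policy_def D_def bregman_def)
  have "q t i \<le> loss_est tx ta L q \<mu>s t i (ta t i) * \<mu> t (tx t i) (ta t i) + lam1 * CPsi"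
    if i: "i \<in> {1..H}" for i
  proof -
    define x where "x = tx t i"
    have x: "x \<in> X" "ta t i \<in> A x" using tr i by (auto simp: x_def trajectory_def)
    have st: "\<forall>p\<in>prob_simplex (A x). omd_obj A D \<eta> \<mu> (loss_est tx ta L q \<mu>s t i) t x (\<mu> (Suc t) x)
                                   \<le> omd_obj A D \<eta> \<mu> (loss_est tx ta L q \<mu>s t i) t x p"
      "q t i = omd_obj A D \<eta> \<mu> (loss_est tx ta L q \<mu>s t i) t x (\<mu> (Suc t) x)"
      using step t i unfolding x_def Let_def by auto
    have "q t i \<le> (\<Sum>b\<in>A x. loss_est tx ta L q \<mu>s t i b * \<mu> t x b) + lam1 * CPsi"
      unfolding st(2)
    proof (rule omd_obj_le_current[OF st(1)])
      show "\<mu> t x \<in> prob_simplex (A x)" using pol x(1) by (simp add: policy_def)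
      then show "D x (vec_lambda (\<mu> t x)) (vec_lambda (\<mu> 1 x)) \<le> CPsi" by (rule D_le[OF x(1)])
      show "0 < \<eta> (Suc t) x" "\<eta> (Suc t) x \<le> \<eta> t x" "1 / \<eta> (Suc t) x - 1 / \<eta> t x \<le> lam1"
        using eta_pos eta_noninc lam_bound t x(1) by auto
    qed (use C0 in \<open>simp_all add: D_def bregman_def\<close>)
    also have "(\<Sum>b\<in>A x. loss_est tx ta L q \<mu>s t i b * \<mu> t x b)
        = loss_est tx ta L q \<mu>s t i (ta t i) * \<mu> t x (ta t i)"
      using game x by (intro sum_loss_est) (auto simp: game_structure_def)
    finally show ?thesis by (simp add: x_def)
  qed
  then show "loss_est tx ta L q \<mu>s t h (ta t h) \<le> (1 + lam1 * CPsi) * kappa X A depth par \<mu>s (tx t h)"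
    using traj t q_last C0 lam_nonneg
    by (intro loss_est_le_kappa[where t = t and tx = tx and ta = ta, OF game tr samp pol _ _ _ _ h]) auto
qed

end
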